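(* Let $M$ and $\tilde M$ be Markov decision processes over the same action space $\mathcal{A}$, with state spaces $\mathcal{S}$ and $\tilde{\mathcal{S}}=(\mathcal{S}\setminus\{s_0\})\cup\{s_0^1,s_0^2\}$ respectively, where $s_0^1,s_0^2$ form a split of the state $s_0\in\mathcal{S}$. Let $\pi^*:\mathcal{S}\to\mathcal{A}$ be an optimal policy in $M$. Then there exists a policy $\tilde\pi:\tilde{\mathcal{S}}\to\mathcal{A}$ with $\tilde\pi(s_0^1)=\tilde\pi(s_0^2)=\pi^*(s_0)$ such that $V^{\tilde\pi}_{\tilde M}=V^{\pi^*}_M$, and for every policy $\pi'\neq\tilde\pi$ on $\tilde{\mathcal{S}}$ we have $V^{\pi'}_{\tilde M}\le V^{\tilde\pi}_{\tilde M}$.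
   Context: $\tilde M$ being obtained from $M$ by splitting $s_0$ into $s_0^1,s_0^2$ means: writing $\phi:\tilde{\mathcal{S}}\to\mathcal{S}$ for the map sending $s_0^1,s_0^2$ to $s_0$ and fixing all other states, $\tilde M$ is itself Markovian and for every $\tilde s\in\tilde{\mathcal{S}}$ and $a\in\mathcal{A}$ the reward satisfies $\tilde R(\tilde s,a)=R(\phi(\tilde s),a)$, and the transition probabilities satisfy $\tilde P(s'\mid\tilde s,a)=P(s'\mid\phi(\tilde s),a)$ for $s'\neq s_0$ and $\tilde P(s_0^1\mid\tilde s,a)+\tilde P(s_0^2\mid\tilde s,a)=P(s_0\mid\phi(\tilde s),a)$, with $\tilde P(\cdot\mid s_0^1,a)=\tilde P(\cdot\mid s_0^2,a)$ and $\tilde R(s_0^1,a)=\tilde R(s_0^2,a)$ (the initial state distribution is split analogously). $V^{\pi}_M$ denotes the value (expected discounted return, discount $\gamma$) of policy $\pi$ in MDP $M$. *)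

theory Defs
  imports "HOL-Probability.Probability"
begin

text \<open>A finite MDP with states of type 's, actions of type 'a, transition kernel
  P s a (a distribution over next states), reward R s a, initial distribution mu and
  discount gamma.\<close>

primrec state_dist :: "('s \<Rightarrow> 'a \<Rightarrow> 's pmf) \<Rightarrow> 's pmf \<Rightarrow> ('s \<Rightarrow> 'a) \<Rightarrow> nat \<Rightarrow> 's pmf" where
  "state_dist P mu pol 0 = mu"
| "state_dist P mu pol (Suc n) = bind_pmf (state_dist P mu pol n) (\<lambda>s. P s (pol s))"

definition policy_value ::
  "real \<Rightarrow> ('s \<Rightarrow> 'a \<Rightarrow> 's pmf) \<Rightarrow> ('s \<Rightarrow> 'a \<Rightarrow> real) \<Rightarrow> 's pmf \<Rightarrow> ('s \<Rightarrow> 'a) \<Rightarrow> real" where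
  "policy_value gamma P R mu pol =
     (\<Sum>n. gamma ^ n * measure_pmf.expectation (state_dist P mu pol n) (\<lambda>s. R s (pol s)))"

definition optimal_policy ::
  "real \<Rightarrow> ('s \<Rightarrow> 'a \<Rightarrow> 's pmf) \<Rightarrow> ('s \<Rightarrow> 'a \<Rightarrow> real) \<Rightarrow> 's pmf \<Rightarrow> ('s \<Rightarrow> 'a) \<Rightarrow> bool" where
  "optimal_policy gamma P R mu pol \<longleftrightarrow>
     (\<forall>pol'. policy_value gamma P R mu pol' \<le> policy_value gamma P R mu pol)"

text \<open>The state space 't of the split MDP is (S - {s0}) \<union> {s01, s02}, realised via the
  map phi :: 't => 's which sends s01, s02 to s0 and is a bijection elsewhere.\<close>
definition split_map :: "('t \<Rightarrow> 's) \<Rightarrow> 's \<Rightarrow> 't \<Rightarrow> 't \<Rightarrow> bool" where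
  "split_map phi s0 s01 s02 \<longleftrightarrow>
     s01 \<noteq> s02 \<and> phi s01 = s0 \<and> phi s02 = s0 \<and>
     bij_betw phi (UNIV - {s01, s02}) (UNIV - {s0})"

definition is_split_mdp ::
  "('t \<Rightarrow> 's) \<Rightarrow> 's \<Rightarrow> 't \<Rightarrow> 't \<Rightarrow>
   ('s \<Rightarrow> 'a \<Rightarrow> 's pmf) \<Rightarrow> ('s \<Rightarrow> 'a \<Rightarrow> real) \<Rightarrow> 's pmf \<Rightarrow>
   ('t \<Rightarrow> 'a \<Rightarrow> 't pmf) \<Rightarrow> ('t \<Rightarrow> 'a \<Rightarrow> real) \<Rightarrow> 't pmf \<Rightarrow> bool" where
  "is_split_mdp phi s0 s01 s02 P R mu Pt Rt mut \<longleftrightarrow>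
     split_map phi s0 s01 s02 \<and>
     (\<forall>t a. Rt t a = R (phi t) a) \<and>
     (\<forall>t a t'. phi t' \<noteq> s0 \<longrightarrow> pmf (Pt t a) t' = pmf (P (phi t) a) (phi t')) \<and>
     (\<forall>t a. pmf (Pt t a) s01 + pmf (Pt t a) s02 = pmf (P (phi t) a) s0) \<and>
     (\<forall>a. Pt s01 a = Pt s02 a) \<and>
     (\<forall>a. Rt s01 a = Rt s02 a) \<and>
     (\<forall>t'. phi t' \<noteq> s0 \<longrightarrow> pmf mut t' = pmf mu (phi t')) \<and>
     pmf mut s01 + pmf mut s02 = pmf mu s0"

end

theory Submission
  imports Defs
begin

(*
  A policy sig on M, composed with the split map phi, has the same value in the split MDP:
  phi pushes the state distributions of the split MDP forward to those of M.  Conversely, a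
  policy pol on the split MDP behaves like a policy on M off s0, but offers two actions at s0,
  namely pol s01 and pol s02.  Of the two policies on M that use these actions at s0, the one
  with the larger value at s0 admits no improvement at s0 by the other action (policy
  improvement), so its value function, lifted along phi, is a Bellman super-solution for pol.
  Hence pol is worth at most that policy, which is worth at most pistar.
*)

lemma expectation_eq_sum_finite:
  fixes p :: "'x::finite pmf" and f :: "'x \<Rightarrow> real"
  shows "measure_pmf.expectation p f = (\<Sum>x\<in>UNIV. pmf p x * f x)"
  by (simp add: integral_measure_pmf_real[of UNIV] mult.commute)

lemma integrable_measure_pmf_finite_type [simp]:
  fixes p :: "'x::finite pmf" and f :: "'x \<Rightarrow> real"
  shows "integrable (measure_pmf p) f"
  by (simp add: integrable_measure_pmf_finite)

lemma expectation_bind_pmf_finite: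
  fixes p :: "'x::finite pmf" and K :: "'x \<Rightarrow> 'y::finite pmf" and f :: "'y \<Rightarrow> real"
  shows "measure_pmf.expectation (bind_pmf p K) f =
           measure_pmf.expectation p (\<lambda>x. measure_pmf.expectation (K x) f)"
  by (simp add: pmf_expectation_bind[of UNIV] expectation_eq_sum_finite[of p])

lemma abs_expectation_le:
  fixes p :: "'x pmf" and f :: "'x \<Rightarrow> real"
  assumes "integrable (measure_pmf p) f" and "\<And>x. \<bar>f x\<bar> \<le> B"
  shows "\<bar>measure_pmf.expectation p f\<bar> \<le> B"
proof -
  have "measure_pmf.expectation p f \<le> B"
    by (rule measure_pmf.integral_le_const) (use assms in \<open>auto simp: abs_le_iff\<close>)
  moreover have "- B \<le> measure_pmf.expectation p f"
    by (rule measure_pmf.integral_ge_const)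
      (use assms in \<open>auto simp: abs_le_iff minus_le_iff intro!: AE_I2\<close>)
  ultimately show ?thesis by linarith
qed

lemma state_dist_Suc_shift:
  "state_dist P mu pol (Suc n) = state_dist P (bind_pmf mu (\<lambda>s. P s (pol s))) pol n"
  by (induction n) (simp_all add: bind_assoc_pmf)

lemma state_dist_bind_pmf:
  "state_dist P (bind_pmf mu K) pol n = bind_pmf mu (\<lambda>x. state_dist P (K x) pol n)"
  by (induction n) (simp_all add: bind_assoc_pmf)

lemma summable_policy_value:
  fixes P :: "'x::finite \<Rightarrow> 'b \<Rightarrow> 'x pmf" and gamma :: real
  assumes "0 \<le> gamma" and "gamma < 1"
  shows "summable (\<lambda>n. gamma ^ n *
           measure_pmf.expectation (state_dist P mu pol n) (\<lambda>s. R s (pol s)))"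
proof -
  define B where "B = (\<Sum>x\<in>UNIV. \<bar>R x (pol x)\<bar>)"
  have "summable (\<lambda>n. B * gamma ^ n)"
    using assms by (intro summable_mult summable_geometric) auto
  moreover have "norm (gamma ^ n *
      measure_pmf.expectation (state_dist P mu pol n) (\<lambda>s. R s (pol s))) \<le> B * gamma ^ n" for n
  proof -
    have "\<bar>measure_pmf.expectation (state_dist P mu pol n) (\<lambda>s. R s (pol s))\<bar> \<le> B"
      by (rule abs_expectation_le) (auto simp: B_def intro: member_le_sum)
    then show ?thesis
      using assms by (simp add: abs_mult mult.commute[of B] mult_left_mono)
  qed
  ultimately show ?thesis
    by (rule summable_comparison_test')
qed

definition state_value ::
  "real \<Rightarrow> ('x \<Rightarrow> 'b \<Rightarrow> 'x pmf) \<Rightarrow> ('x \<Rightarrow> 'b \<Rightarrow> real) \<Rightarrow> ('x \<Rightarrow> 'b) \<Rightarrow> 'x \<Rightarrow> real" where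
  "state_value gamma P R pol x = policy_value gamma P R (return_pmf x) pol"

definition q_value ::
  "real \<Rightarrow> ('x \<Rightarrow> 'b \<Rightarrow> 'x pmf) \<Rightarrow> ('x \<Rightarrow> 'b \<Rightarrow> real) \<Rightarrow> ('x \<Rightarrow> 'b) \<Rightarrow> 'x \<Rightarrow> 'b \<Rightarrow> real" where
  "q_value gamma P R pol x a =
     R x a + gamma * measure_pmf.expectation (P x a) (state_value gamma P R pol)"

lemma policy_value_eq_expectation_state_value:
  fixes P :: "'x::finite \<Rightarrow> 'b \<Rightarrow> 'x pmf" and gamma :: real
  assumes "0 \<le> gamma" and "gamma < 1"
  shows "policy_value gamma P R mu pol = measure_pmf.expectation mu (state_value gamma P R pol)"
proof -
  let ?r = "\<lambda>n x. gamma ^ n *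
    measure_pmf.expectation (state_dist P (return_pmf x) pol n) (\<lambda>s. R s (pol s))"
  have "gamma ^ n * measure_pmf.expectation (state_dist P mu pol n) (\<lambda>s. R s (pol s)) =
          (\<Sum>x\<in>UNIV. pmf mu x * ?r n x)" for n
  proof -
    have "state_dist P mu pol n = bind_pmf mu (\<lambda>x. state_dist P (return_pmf x) pol n)"
      using state_dist_bind_pmf[of P mu return_pmf pol n] by (simp add: bind_return_pmf')
    then show ?thesis
      by (simp add: expectation_bind_pmf_finite expectation_eq_sum_finite[of mu]
          sum_distrib_left algebra_simps)
  qed
  then have "policy_value gamma P R mu pol = (\<Sum>n. \<Sum>x\<in>UNIV. pmf mu x * ?r n x)"
    by (simp add: policy_value_def)
  also have "\<dots> = (\<Sum>x\<in>UNIV. \<Sum>n. pmf mu x * ?r n x)"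
    by (rule suminf_sum) (intro summable_mult summable_policy_value assms)
  also have "\<dots> = (\<Sum>x\<in>UNIV. pmf mu x * state_value gamma P R pol x)"
    unfolding state_value_def policy_value_def
    by (intro sum.cong refl suminf_mult summable_policy_value assms)
  also have "\<dots> = measure_pmf.expectation mu (state_value gamma P R pol)"
    by (simp add: expectation_eq_sum_finite)
  finally show ?thesis .
qed

lemma state_value_eq_q_value:
  fixes P :: "'x::finite \<Rightarrow> 'b \<Rightarrow> 'x pmf" and gamma :: real
  assumes "0 \<le> gamma" and "gamma < 1"
  shows "state_value gamma P R pol x = q_value gamma P R pol x (pol x)"
proof -
  let ?f = "\<lambda>n. gamma ^ n *
    measure_pmf.expectation (state_dist P (return_pmf x) pol n) (\<lambda>s. R s (pol s))"
  have "state_value gamma P R pol x = ?f 0 + (\<Sum>n. ?f (Suc n))"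
    using suminf_split_head[OF summable_policy_value[OF assms, of P "return_pmf x" pol R]]
    unfolding state_value_def policy_value_def by linarith
  also have "(\<Sum>n. ?f (Suc n)) = (\<Sum>n. gamma * (gamma ^ n *
          measure_pmf.expectation (state_dist P (P x (pol x)) pol n) (\<lambda>s. R s (pol s))))"
    by (simp only: state_dist_Suc_shift bind_return_pmf power_Suc mult.assoc)
  also have "\<dots> = gamma * policy_value gamma P R (P x (pol x)) pol"
    unfolding policy_value_def by (intro suminf_mult summable_policy_value assms)
  also have "\<dots> = gamma * measure_pmf.expectation (P x (pol x)) (state_value gamma P R pol)"
    by (simp add: policy_value_eq_expectation_state_value assms)
  finally show ?thesis
    by (simp add: q_value_def)
qed

lemma policy_value_le_of_bellman_super:
  fixes P :: "'x::finite \<Rightarrow> 'b \<Rightarrow> 'x pmf" and gamma :: real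
  assumes "0 \<le> gamma" and "gamma < 1"
    and super: "\<And>x. R x (pol x) + gamma * measure_pmf.expectation (P x (pol x)) W \<le> W x"
  shows "policy_value gamma P R mu pol \<le> measure_pmf.expectation mu W"
proof -
  define e where "e n = measure_pmf.expectation (state_dist P mu pol n) (\<lambda>s. R s (pol s))" for n
  define w where "w n = measure_pmf.expectation (state_dist P mu pol n) W" for n
  have step: "e n + gamma * w (Suc n) \<le> w n" for n
  proof -
    have "e n + gamma * w (Suc n) = measure_pmf.expectation (state_dist P mu pol n)
            (\<lambda>x. R x (pol x) + gamma * measure_pmf.expectation (P x (pol x)) W)"
      by (simp add: e_def w_def expectation_bind_pmf_finite)
    also have "\<dots> \<le> w n"
      unfolding w_def by (intro integral_mono super) auto
    finally show ?thesis .
  qed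
  have telescope: "(\<Sum>n<N. gamma ^ n * e n) + gamma ^ N * w N \<le> w 0" for N
  proof (induction N)
    case (Suc N)
    have "gamma ^ N * (e N + gamma * w (Suc N)) \<le> gamma ^ N * w N"
      using step[of N] assms by (intro mult_left_mono) auto
    then show ?case
      using Suc.IH by (simp add: algebra_simps)
  qed simp
  define B where "B = (\<Sum>x\<in>UNIV. \<bar>W x\<bar>)"
  have partial: "(\<Sum>n<N. gamma ^ n * e n) \<le> w 0 + gamma ^ N * B" for N
  proof -
    have "\<bar>w N\<bar> \<le> B"
      unfolding w_def by (rule abs_expectation_le) (auto simp: B_def intro: member_le_sum)
    then have "- (gamma ^ N * w N) \<le> gamma ^ N * B"
      using assms mult_left_mono[of "- w N" B "gamma ^ N"] by simp
    then show ?thesis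
      using telescope[of N] by linarith
  qed
  have "(\<lambda>N. \<Sum>n<N. gamma ^ n * e n) \<longlonglongrightarrow> policy_value gamma P R mu pol"
    using summable_LIMSEQ[OF summable_policy_value[OF assms(1,2)]]
    unfolding policy_value_def e_def .
  moreover have "(\<lambda>N. w 0 + gamma ^ N * B) \<longlonglongrightarrow> w 0"
    using assms by (auto intro!: tendsto_eq_intros)
  ultimately have "policy_value gamma P R mu pol \<le> w 0"
    using partial by (intro LIMSEQ_le) auto
  then show ?thesis
    by (simp add: w_def)
qed

lemma policy_value_ge_of_bellman_sub:
  fixes P :: "'x::finite \<Rightarrow> 'b \<Rightarrow> 'x pmf" and gamma :: real
  assumes "0 \<le> gamma" and "gamma < 1"
    and sub: "\<And>x. W x \<le> R x (pol x) + gamma * measure_pmf.expectation (P x (pol x)) W"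
  shows "measure_pmf.expectation mu W \<le> policy_value gamma P R mu pol"
proof -
  have "policy_value gamma P (\<lambda>x a. - R x a) mu pol \<le> measure_pmf.expectation mu (\<lambda>x. - W x)"
  proof (rule policy_value_le_of_bellman_super[OF assms(1,2)])
    show "- R x (pol x) + gamma * measure_pmf.expectation (P x (pol x)) (\<lambda>x. - W x) \<le> - W x" for x
      using sub[of x] by simp
  qed
  moreover have "policy_value gamma P (\<lambda>x a. - R x a) mu pol = - policy_value gamma P R mu pol"
    unfolding policy_value_def using suminf_minus[OF summable_policy_value[OF assms(1,2)]] by simp
  ultimately show ?thesis
    by simp
qed

lemma q_value_le_state_value_of_deviation:
  fixes P :: "'x::finite \<Rightarrow> 'b \<Rightarrow> 'x pmf" and gamma :: real
  assumes "0 \<le> gamma" and "gamma < 1"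
    and agree: "\<And>s. s \<noteq> s0 \<Longrightarrow> sig' s = sig s"
    and le: "state_value gamma P R sig' s0 \<le> state_value gamma P R sig s0"
  shows "q_value gamma P R sig s0 (sig' s0) \<le> state_value gamma P R sig s0"
proof (rule ccontr)
  let ?v = "state_value gamma P R sig"
  assume "\<not> ?thesis"
  then have gt: "?v s0 < q_value gamma P R sig s0 (sig' s0)"
    by simp
  have "?v x \<le> R x (sig' x) + gamma * measure_pmf.expectation (P x (sig' x)) ?v" for x
    using gt state_value_eq_q_value[OF assms(1,2), of P R sig x] agree[of x]
    by (cases "x = s0") (auto simp: q_value_def)
  then have "?v x \<le> state_value gamma P R sig' x" for x
    using policy_value_ge_of_bellman_sub[OF assms(1,2), of ?v R sig' P "return_pmf x"]
    by (simp add: state_value_def)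
  then have "q_value gamma P R sig s0 (sig' s0) \<le> q_value gamma P R sig' s0 (sig' s0)"
    using assms(1) by (auto simp: q_value_def intro!: mult_left_mono integral_mono)
  then show False
    using gt le state_value_eq_q_value[OF assms(1,2), of P R sig' s0] by simp
qed

lemma ex_policy_q_value_le_state_value:
  fixes P :: "'x::finite \<Rightarrow> 'b \<Rightarrow> 'x pmf" and gamma :: real
  assumes "0 \<le> gamma" and "gamma < 1"
    and agree: "\<And>s. s \<noteq> s0 \<Longrightarrow> sig2 s = sig1 s"
  shows "\<exists>sig\<in>{sig1, sig2}. \<forall>a\<in>{sig1 s0, sig2 s0}.
           q_value gamma P R sig s0 a \<le> state_value gamma P R sig s0"
proof (cases "state_value gamma P R sig2 s0 \<le> state_value gamma P R sig1 s0")
  case True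
  then have "q_value gamma P R sig1 s0 (sig2 s0) \<le> state_value gamma P R sig1 s0"
    by (intro q_value_le_state_value_of_deviation[OF assms(1,2)]) (use agree in auto)
  then show ?thesis
    using state_value_eq_q_value[OF assms(1,2), of P R sig1 s0] by auto
next
  case False
  then have "q_value gamma P R sig2 s0 (sig1 s0) \<le> state_value gamma P R sig2 s0"
    by (intro q_value_le_state_value_of_deviation[OF assms(1,2)]) (use agree in auto)
  then show ?thesis
    using state_value_eq_q_value[OF assms(1,2), of P R sig2 s0] by auto
qed

definition is_lumping ::
  "('t \<Rightarrow> 's) \<Rightarrow> ('s \<Rightarrow> 'a \<Rightarrow> 's pmf) \<Rightarrow> ('s \<Rightarrow> 'a \<Rightarrow> real) \<Rightarrow> 's pmf \<Rightarrow>
   ('t \<Rightarrow> 'a \<Rightarrow> 't pmf) \<Rightarrow> ('t \<Rightarrow> 'a \<Rightarrow> real) \<Rightarrow> 't pmf \<Rightarrow> bool" where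
  "is_lumping phi P R mu Pt Rt mut \<longleftrightarrow>
     map_pmf phi mut = mu \<and>
     (\<forall>t a. map_pmf phi (Pt t a) = P (phi t) a) \<and>
     (\<forall>t a. Rt t a = R (phi t) a)"

lemma state_dist_lumping:
  assumes "is_lumping phi P R mu Pt Rt mut"
  shows "map_pmf phi (state_dist Pt mut (sig \<circ> phi) n) = state_dist P mu sig n"
proof (induction n)
  case (Suc n)
  show ?case
    using assms by (simp add: Suc.IH[symmetric] is_lumping_def map_bind_pmf bind_map_pmf)
qed (use assms in \<open>simp add: is_lumping_def\<close>)

lemma policy_value_lumping:
  assumes "is_lumping phi P R mu Pt Rt mut"
  shows "policy_value gamma Pt Rt mut (sig \<circ> phi) = policy_value gamma P R mu sig"
proof -
  have "measure_pmf.expectation (state_dist Pt mut (sig \<circ> phi) n) (\<lambda>t. Rt t ((sig \<circ> phi) t)) =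
          measure_pmf.expectation (state_dist P mu sig n) (\<lambda>s. R s (sig s))" for n
    using assms by (simp add: is_lumping_def flip: state_dist_lumping[OF assms])
  then show ?thesis
    by (simp add: policy_value_def)
qed

lemma policy_value_le_of_lumping:
  fixes P :: "'s::finite \<Rightarrow> 'a \<Rightarrow> 's pmf" and Pt :: "'t::finite \<Rightarrow> 'a \<Rightarrow> 't pmf"
    and gamma :: real
  assumes "0 \<le> gamma" and "gamma < 1"
    and lump: "is_lumping phi P R mu Pt Rt mut"
    and greedy: "\<And>t. q_value gamma P R sig (phi t) (pol t) \<le> state_value gamma P R sig (phi t)"
  shows "policy_value gamma Pt Rt mut pol \<le> policy_value gamma P R mu sig"
proof -
  let ?v = "state_value gamma P R sig"
  have expectation_lumping: "measure_pmf.expectation p (\<lambda>t. ?v (phi t)) =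
      measure_pmf.expectation (map_pmf phi p) ?v" for p
    by simp
  have "policy_value gamma Pt Rt mut pol \<le> measure_pmf.expectation mut (\<lambda>t. ?v (phi t))"
  proof (rule policy_value_le_of_bellman_super[OF assms(1,2)])
    show "Rt t (pol t) + gamma * measure_pmf.expectation (Pt t (pol t)) (\<lambda>t. ?v (phi t))
            \<le> ?v (phi t)" for t
      using greedy[of t] lump by (simp only: expectation_lumping is_lumping_def q_value_def)
  qed
  also have "\<dots> = measure_pmf.expectation mu ?v"
    using lump by (simp only: expectation_lumping is_lumping_def)
  also have "\<dots> = policy_value gamma P R mu sig"
    by (rule policy_value_eq_expectation_state_value[OF assms(1,2), symmetric])
  finally show ?thesis .
qed

lemma split_map_eq_iff:
  assumes "split_map phi s0 s01 s02"
  shows "phi t = s0 \<longleftrightarrow> t = s01 \<or> t = s02"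
  using assms bij_betw_apply[of phi "UNIV - {s01, s02}" "UNIV - {s0}" t]
  by (auto simp: split_map_def)

lemma split_map_inj_on:
  assumes "split_map phi s0 s01 s02"
  shows "inj_on phi (UNIV - {s01, s02})"
  using assms by (simp add: split_map_def bij_betw_def)

lemma split_map_inv_into:
  assumes "split_map phi s0 s01 s02" and "t \<notin> {s01, s02}"
  shows "inv_into (UNIV - {s01, s02}) phi (phi t) = t"
  using assms by (intro inv_into_f_f split_map_inj_on) auto

lemma map_pmf_eq_of_split_map:
  fixes phi :: "'t::finite \<Rightarrow> 's" and p :: "'t pmf"
  assumes sm: "split_map phi s0 s01 s02"
    and off_s0: "\<And>t. phi t \<noteq> s0 \<Longrightarrow> pmf p t = pmf q (phi t)"
    and at_s0: "pmf p s01 + pmf p s02 = pmf q s0"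
  shows "map_pmf phi p = q"
proof (rule pmf_eqI)
  fix s
  have "pmf (map_pmf phi p) s = sum (pmf p) (phi -` {s})"
    by (simp add: pmf_map measure_measure_pmf_finite)
  also have "\<dots> = pmf q s"
  proof (cases "s = s0")
    case True
    then have "phi -` {s} = {s01, s02}"
      using split_map_eq_iff[OF sm] by auto
    then show ?thesis
      using True at_s0 sm by (simp add: split_map_def)
  next
    case False
    then have "s \<in> phi ` (UNIV - {s01, s02})"
      using sm by (simp add: split_map_def bij_betw_def)
    then obtain t where t: "t \<notin> {s01, s02}" "phi t = s"
      by blast
    have "phi -` {s} = {t}"
    proof (intro set_eqI iffI)
      fix t'
      assume "t' \<in> phi -` {s}"
      then have "t' \<notin> {s01, s02}" and "phi t' = phi t"
        using False t split_map_eq_iff[OF sm, of t'] by auto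
      then show "t' \<in> {t}"
        using inj_onD[OF split_map_inj_on[OF sm]] t by simp
    next
      fix t'
      assume "t' \<in> {t}"
      then show "t' \<in> phi -` {s}"
        using t by simp
    qed
    then show ?thesis
      using off_s0[of t] t False by simp
  qed
  finally show "pmf (map_pmf phi p) s = pmf q s" .
qed

lemma is_split_mdp_imp_is_lumping:
  fixes phi :: "'t::finite \<Rightarrow> 's"
  assumes "is_split_mdp phi s0 s01 s02 P R mu Pt Rt mut"
  shows "is_lumping phi P R mu Pt Rt mut"
proof -
  have sm: "split_map phi s0 s01 s02"
    using assms by (simp add: is_split_mdp_def)
  show ?thesis
    using assms unfolding is_split_mdp_def is_lumping_def
    by (intro conjI allI map_pmf_eq_of_split_map[OF sm]) auto
qed

lemma split_mdp_policy_value_le: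
  fixes phi :: "'t::finite \<Rightarrow> 's::finite" and gamma :: real
  assumes "0 \<le> gamma" and "gamma < 1"
    and split: "is_split_mdp phi s0 s01 s02 P R mu Pt Rt mut"
  shows "\<exists>sig. policy_value gamma Pt Rt mut pol \<le> policy_value gamma P R mu sig"
proof -
  have sm: "split_map phi s0 s01 s02"
    using split by (simp add: is_split_mdp_def)
  define sig1 where
    "sig1 s = (if s = s0 then pol s01 else pol (inv_into (UNIV - {s01, s02}) phi s))" for s
  define sig2 where "sig2 = sig1(s0 := pol s02)"
  obtain sig where sig: "sig \<in> {sig1, sig2}"
    and at_s0: "\<forall>a\<in>{pol s01, pol s02}. q_value gamma P R sig s0 a \<le> state_value gamma P R sig s0"
    using ex_policy_q_value_le_state_value[OF assms(1,2), of s0 sig2 sig1 P R]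
    by (auto simp: sig1_def sig2_def)
  have "q_value gamma P R sig (phi t) (pol t) \<le> state_value gamma P R sig (phi t)" for t
  proof (cases "t \<in> {s01, s02}")
    case True
    then show ?thesis
      using at_s0 sm by (auto simp: split_map_def)
  next
    case False
    then have "sig (phi t) = pol t"
      using sig split_map_eq_iff[OF sm, of t] split_map_inv_into[OF sm False]
      by (auto simp: sig1_def sig2_def)
    then show ?thesis
      using state_value_eq_q_value[OF assms(1,2), of P R sig "phi t"] by simp
  qed
  then show ?thesis
    using policy_value_le_of_lumping[OF assms(1,2) is_split_mdp_imp_is_lumping[OF split]]
    by blast
qed

theorem theorem1:
  fixes phi :: "'t::finite \<Rightarrow> 's::finite"
    and s0 :: 's and s01 s02 :: 't
    and P :: "'s \<Rightarrow> 'a \<Rightarrow> 's pmf" and R :: "'s \<Rightarrow> 'a \<Rightarrow> real" and mu :: "'s pmf"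
    and Pt :: "'t \<Rightarrow> 'a \<Rightarrow> 't pmf" and Rt :: "'t \<Rightarrow> 'a \<Rightarrow> real" and mut :: "'t pmf"
    and gamma :: real and pistar :: "'s \<Rightarrow> 'a"
  assumes "0 \<le> gamma" and "gamma < 1"
    and "is_split_mdp phi s0 s01 s02 P R mu Pt Rt mut"
    and "optimal_policy gamma P R mu pistar"
  shows "\<exists>pit :: 't \<Rightarrow> 'a.
           pit s01 = pistar s0 \<and> pit s02 = pistar s0 \<and>
           policy_value gamma Pt Rt mut pit = policy_value gamma P R mu pistar \<and>
           (\<forall>pi'. pi' \<noteq> pit \<longrightarrow> policy_value gamma Pt Rt mut pi' \<le> policy_value gamma Pt Rt mut pit)"
proof -
  have "phi s01 = s0" and "phi s02 = s0"
    using assms(3) by (auto simp: is_split_mdp_def split_map_def)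
  moreover have "policy_value gamma Pt Rt mut (pistar \<circ> phi) = policy_value gamma P R mu pistar"
    using assms(3) by (intro policy_value_lumping is_split_mdp_imp_is_lumping)
  moreover have "policy_value gamma Pt Rt mut pi' \<le> policy_value gamma P R mu pistar" for pi'
    using split_mdp_policy_value_le[OF assms(1-3), of pi'] assms(4)
    by (auto simp: optimal_policy_def intro: order_trans)
  ultimately show ?thesis
    by (intro exI[of _ "pistar \<circ> phi"]) simp
qed

end
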